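(* Let $\epsilon=(\epsilon_n)$ and $\epsilon'=(\epsilon'_n)$ be sequences with $0<\epsilon_n,\epsilon'_n\le1$. Then $A^\epsilon\subseteq A^{\epsilon'}$ if and only if there exists $C>0$ with $\epsilon'_n\le C\epsilon_n$ for all $n$. In particular, $A^\epsilon=A^{\epsilon'}$ if and only if there exists $C>0$ with $C^{-1}\epsilon_n\le\epsilon'_n\le C\epsilon_n$ for all $n$.
   Context: For a sequence $\epsilon=(\epsilon_n)$ in $(0,1]$, $A^\epsilon=\{(x_n)\in\mathbb{C}^{\mathbb{N}}:\sup_n|x_n|^{\epsilon_n}<\infty\}$, where $|\cdot|$ is the Euclidean norm on $\mathbb{C}$. *)

theory Defs
  imports "HOL-Analysis.Analysis"
begin

text \<open>The space A^eps of complex sequences x with sup_n |x_n|^(eps_n) finite.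
  Since eps_n > 0, |x_n|^(eps_n) is computed with powr (0 powr e = 0 is correct here).\<close>
definition A_eps :: "(nat \<Rightarrow> real) \<Rightarrow> (nat \<Rightarrow> complex) set" where
  "A_eps eps = {x. bdd_above (range (\<lambda>n. cmod (x n) powr eps n))}"

end

theory Submission
  imports Defs
begin

text \<open>If \<open>\<epsilon>' \<le> C \<epsilon>\<close>, then \<open>|x\<^sub>n|\<^bsup>\<epsilon>'\<^sub>n\<^esup> \<le> max 1 (|x\<^sub>n|\<^bsup>\<epsilon>\<^sub>n\<^esup>)\<^bsup>C\<^esup>\<close>, so bounded sequences stay
  bounded. Conversely, the sequence \<open>x\<^sub>n = exp (1/\<epsilon>\<^sub>n)\<close> has \<open>|x\<^sub>n|\<^bsup>\<epsilon>\<^sub>n\<^esup> = e\<close>, and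
  \<open>|x\<^sub>n|\<^bsup>\<epsilon>'\<^sub>n\<^esup> = exp (\<epsilon>'\<^sub>n/\<epsilon>\<^sub>n)\<close> is bounded only if \<open>\<epsilon>'\<^sub>n/\<epsilon>\<^sub>n\<close> is.\<close>

lemma powr_le_max_one_powr_powr:
  fixes r a b C :: real
  assumes "0 \<le> r" "0 \<le> b" "b \<le> C * a"
  shows "r powr b \<le> max 1 ((r powr a) powr C)"
proof (cases "r \<le> 1")
  case True
  then have "r powr b \<le> 1"
    using assms powr_mono2[of b r 1] by simp
  then show ?thesis by linarith
next
  case False
  then have "r powr b \<le> r powr (a * C)"
    using assms by (simp add: powr_mono mult.commute)
  also have "\<dots> = (r powr a) powr C"
    by (simp add: powr_powr)
  finally show ?thesis by linarith
qed

lemma A_eps_mono: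
  fixes eps eps' :: "nat \<Rightarrow> real"
  assumes "\<And>n. 0 \<le> eps' n" and "0 \<le> C" and "\<And>n. eps' n \<le> C * eps n"
  shows "A_eps eps \<subseteq> A_eps eps'"
proof
  fix x assume "x \<in> A_eps eps"
  then obtain M where M: "\<And>n. cmod (x n) powr eps n \<le> M"
    unfolding A_eps_def bdd_above_def by auto
  have "cmod (x n) powr eps' n \<le> max 1 (max 1 M powr C)" for n
  proof -
    have "cmod (x n) powr eps' n \<le> max 1 ((cmod (x n) powr eps n) powr C)"
      using assms by (intro powr_le_max_one_powr_powr) auto
    also have "\<dots> \<le> max 1 (max 1 M powr C)"
      using M[of n] \<open>0 \<le> C\<close> by (intro max.mono powr_mono2) auto
    finally show ?thesis .
  qed
  then show "x \<in> A_eps eps'"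
    unfolding A_eps_def bdd_above_def by auto
qed

lemma A_eps_subset_imp_exponent_bound:
  fixes eps eps' :: "nat \<Rightarrow> real"
  assumes pos: "\<And>n. 0 < eps n" and sub: "A_eps eps \<subseteq> A_eps eps'"
  shows "\<exists>C>0. \<forall>n. eps' n \<le> C * eps n"
proof -
  define x where "x n = complex_of_real (exp (1 / eps n))" for n
  have x_powr: "cmod (x n) powr e = exp (e / eps n)" for n e
    by (simp add: x_def powr_def)
  have "x \<in> A_eps eps"
    using pos[THEN less_imp_neq] by (simp add: A_eps_def x_powr)
  with sub have "x \<in> A_eps eps'" by blast
  then obtain M where M: "\<And>n. exp (eps' n / eps n) \<le> M"
    unfolding A_eps_def bdd_above_def by (auto simp: x_powr)
  have "eps' n \<le> max 1 (ln M) * eps n" for n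
  proof -
    have "eps' n / eps n \<le> ln M"
      using M[of n] by (metis exp_gt_zero exp_le_cancel_iff exp_ln less_le_trans)
    then have "eps' n / eps n \<le> max 1 (ln M)" by linarith
    then show ?thesis
      using pos[of n] by (simp add: divide_le_eq)
  qed
  then show ?thesis
    by (intro exI[of _ "max 1 (ln M)"]) auto
qed

lemma A_eps_subset_iff:
  fixes eps eps' :: "nat \<Rightarrow> real"
  assumes "\<And>n. 0 < eps n" and "\<And>n. 0 \<le> eps' n"
  shows "A_eps eps \<subseteq> A_eps eps' \<longleftrightarrow> (\<exists>C>0. \<forall>n. eps' n \<le> C * eps n)"
  using assms A_eps_subset_imp_exponent_bound A_eps_mono
  by (metis less_eq_real_def)

lemma two_sided_bound_iff:
  fixes f g :: "nat \<Rightarrow> real"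
  assumes "\<And>n. 0 < f n" and "\<And>n. 0 < g n"
  shows "(\<exists>C>0. \<forall>n. g n \<le> C * f n) \<and> (\<exists>C>0. \<forall>n. f n \<le> C * g n)
    \<longleftrightarrow> (\<exists>C>0. \<forall>n. f n / C \<le> g n \<and> g n \<le> C * f n)"
proof
  assume "(\<exists>C>0. \<forall>n. g n \<le> C * f n) \<and> (\<exists>C>0. \<forall>n. f n \<le> C * g n)"
  then obtain C1 C2 where "C1 > 0" "\<And>n. g n \<le> C1 * f n"
    and "C2 > 0" "\<And>n. f n \<le> C2 * g n" by auto
  moreover have "C1 * f n \<le> max C1 C2 * f n" "C2 * g n \<le> max C1 C2 * g n" for n
    using assms[of n] by (simp_all add: mult_right_mono)
  ultimately have "\<forall>n. f n / max C1 C2 \<le> g n \<and> g n \<le> max C1 C2 * f n"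
    by (smt (verit) divide_le_eq mult.commute)
  then show "\<exists>C>0. \<forall>n. f n / C \<le> g n \<and> g n \<le> C * f n"
    using \<open>C1 > 0\<close> by (intro exI[of _ "max C1 C2"]) auto
next
  assume "\<exists>C>0. \<forall>n. f n / C \<le> g n \<and> g n \<le> C * f n"
  then show "(\<exists>C>0. \<forall>n. g n \<le> C * f n) \<and> (\<exists>C>0. \<forall>n. f n \<le> C * g n)"
    by (auto simp: divide_le_eq mult.commute)
qed

theorem mainTheorem9:
  fixes eps eps' :: "nat \<Rightarrow> real"
  assumes "\<And>n. 0 < eps n \<and> eps n \<le> 1"
    and "\<And>n. 0 < eps' n \<and> eps' n \<le> 1"
  shows "(A_eps eps \<subseteq> A_eps eps' \<longleftrightarrow> (\<exists>C>0. \<forall>n. eps' n \<le> C * eps n))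
    \<and> (A_eps eps = A_eps eps' \<longleftrightarrow>
         (\<exists>C>0. \<forall>n. eps n / C \<le> eps' n \<and> eps' n \<le> C * eps n))"
proof -
  have pos: "\<And>n. 0 < eps n" "\<And>n. 0 < eps' n"
    using assms by auto
  have "A_eps eps = A_eps eps' \<longleftrightarrow>
      (\<exists>C>0. \<forall>n. eps' n \<le> C * eps n) \<and> (\<exists>C>0. \<forall>n. eps n \<le> C * eps' n)"
    using A_eps_subset_iff[of eps eps'] A_eps_subset_iff[of eps' eps] pos
    by (auto simp: less_imp_le)
  then show ?thesis
    using A_eps_subset_iff[of eps eps'] two_sided_bound_iff[of eps eps'] pos
    by (simp add: less_imp_le)
qed

end
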